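(* Let $(\mathbf M,\mathfrak I)$ be a ranked merge-model and let $\mathfrak C$ be the cleaning of $\mathfrak I$. Then for every positive integer $r$, $\mathrm w_r(\mathbf M,\mathfrak C)\le\mathrm w_r(\mathbf M,\mathfrak I)$.
   Context: Conventions. $\sigma$ is a finite set of binary relation symbols. $(V)_2=\{(u,v)\in V^2:u\ne v\}$. A tree-order is a partial order $\preceq$ with least element (root) such that elements below any element form a chain; maximal elements are leaves; $\pi(x)$ is the parent of non-root $x$; $x\parallel y$ = incomparable. For pairs, $(x,y)\preceq(x',y')$ iff $x\preceq x'$ and $y\preceq y'$; $\prec$ = $\preceq$ and distinct. Merge-models: $\sigma^*=\{\preceq\}\cup\{S_{Z,\alpha}:Z\in\sigma,\alpha\in\{0,1\}\}$, $S_Z=S_{Z,0}\cup S_{Z,1}$, $S=\bigcup_Z S_Z$. A merge-model is a finite $\sigma^*$-structure $\mathbf M$ with: (1) $\preceq$ a tree-order, root $\rho(\mathbf M)$, leaves $V(\mathbf M)$; (2) $S(x,y)\Rightarrow x=y$ or $x\parallel y$; (3) no $(x,y)\prec(x',y')$ with $S(x,y')$ and $S(x',y)$; (4) never both $S_{Z,0}(x,y)$ and $S_{Z,1}(x,y)$; (5) for all $Z$ and $(u,v)\in(V(\mathbf M))_2$ some $(x,y)\preceq(u,v)$ has $S_Z(x,y)$. Interval ranking: map $\mathfrak I$ from the domain to closed real intervals with $x\prec y\Rightarrow\max\mathfrak I(y)<\min\mathfrak I(x)$ and $S(x,y)\Rightarrow\mathfrak I(x)\cap\mathfrak I(y)\ne\emptyset$;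 $(\mathbf M,\mathfrak I)$ is a ranked merge-model. Cleaning: $f(x)=\min\mathfrak I(x)$ if $x$ is not a leaf, $f(x)=\min_{y\in V(\mathbf M)}\min\mathfrak I(y)$ if $x$ is a leaf; $g(x)=|\{f(y):y\in M, f(y)\le f(x)\}|$; $\mathfrak C(\rho(\mathbf M))=[g(\rho(\mathbf M)),g(\rho(\mathbf M))]$, $\mathfrak C(x)=[g(x),g(\pi(x))-1]$ otherwise. Merge-walks: for real $\tau<\min\mathfrak I(\rho(\mathbf M))$, a $\tau$-bounded merge-walk of order $n$ is $(u_0,v_1,u_1,\dots,v_n,u_n,v_{n+1})$ with $u_0$ a leaf; $u_{i-1},v_i$ comparable or equal ($1\le i\le n+1$); $S(v_i,u_i)$ and $\max(\mathfrak I(u_i)\cap\mathfrak I(v_i))\le\tau$ ($1\le i\le n$); $\min\mathfrak I(v_{n+1})\le\tau<\min\mathfrak I(\pi(v_{n+1}))$. $\mathrm{MWReach}_r(v,\tau)$ = set of such $v_{n+1}$ with $u_0=v$, $n\le r$; $\mathrm w_r(\mathbf M,\mathfrak I)=\max_\tau\max_{v\in V(\mathbf M)}|\mathrm{MWReach}_r(v,\tau)|$. *)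

theory Defs
  imports Main "HOL.Real"
begin

text \<open>A structure has finite domain M (type 'a), tree-order le, and relations
S Z alpha x y, where the index alpha in {0,1} is encoded as bool (False = 0, True = 1).\<close>

definition tree_order :: "'a set \<Rightarrow> ('a \<Rightarrow> 'a \<Rightarrow> bool) \<Rightarrow> bool" where
  "tree_order M le \<longleftrightarrow>
     (\<forall>x y. le x y \<longrightarrow> x \<in> M \<and> y \<in> M) \<and>
     (\<forall>x\<in>M. le x x) \<and>
     (\<forall>x\<in>M. \<forall>y\<in>M. le x y \<and> le y x \<longrightarrow> x = y) \<and>
     (\<forall>x\<in>M. \<forall>y\<in>M. \<forall>z\<in>M. le x y \<and> le y z \<longrightarrow> le x z) \<and>
     (\<exists>r\<in>M. \<forall>x\<in>M. le r x) \<and>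
     (\<forall>x\<in>M. \<forall>y\<in>M. \<forall>z\<in>M. le y x \<and> le z x \<longrightarrow> le y z \<or> le z y)"

definition tlt :: "('a \<Rightarrow> 'a \<Rightarrow> bool) \<Rightarrow> 'a \<Rightarrow> 'a \<Rightarrow> bool" where
  "tlt le x y \<longleftrightarrow> le x y \<and> x \<noteq> y"

definition incomp :: "('a \<Rightarrow> 'a \<Rightarrow> bool) \<Rightarrow> 'a \<Rightarrow> 'a \<Rightarrow> bool" where
  "incomp le x y \<longleftrightarrow> \<not> le x y \<and> \<not> le y x"

definition troot :: "'a set \<Rightarrow> ('a \<Rightarrow> 'a \<Rightarrow> bool) \<Rightarrow> 'a" where
  "troot M le = (THE r. r \<in> M \<and> (\<forall>x\<in>M. le r x))"

definition leaves :: "'a set \<Rightarrow> ('a \<Rightarrow> 'a \<Rightarrow> bool) \<Rightarrow> 'a set" where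
  "leaves M le = {x \<in> M. \<forall>y\<in>M. le x y \<longrightarrow> y = x}"

definition tparent :: "'a set \<Rightarrow> ('a \<Rightarrow> 'a \<Rightarrow> bool) \<Rightarrow> 'a \<Rightarrow> 'a" where
  "tparent M le x = (THE p. p \<in> M \<and> tlt le p x \<and> (\<forall>q\<in>M. tlt le q x \<longrightarrow> le q p))"

definition SS :: "('z \<Rightarrow> bool \<Rightarrow> 'a \<Rightarrow> 'a \<Rightarrow> bool) \<Rightarrow> 'a \<Rightarrow> 'a \<Rightarrow> bool" where
  "SS S x y \<longleftrightarrow> (\<exists>Z a. S Z a x y)"

definition merge_model ::
  "'z set \<Rightarrow> 'a set \<Rightarrow> ('a \<Rightarrow> 'a \<Rightarrow> bool) \<Rightarrow> ('z \<Rightarrow> bool \<Rightarrow> 'a \<Rightarrow> 'a \<Rightarrow> bool) \<Rightarrow> bool" where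
  "merge_model \<Sigma> M le S \<longleftrightarrow>
     finite \<Sigma> \<and> finite M \<and> tree_order M le \<and>
     (\<forall>Z a x y. S Z a x y \<longrightarrow> Z \<in> \<Sigma> \<and> x \<in> M \<and> y \<in> M) \<and>
     (\<forall>x y. SS S x y \<longrightarrow> x = y \<or> incomp le x y) \<and>
     (\<not> (\<exists>x y x' y'. le x x' \<and> le y y' \<and> (x, y) \<noteq> (x', y') \<and> SS S x y' \<and> SS S x' y)) \<and>
     (\<forall>Z x y. \<not> (S Z False x y \<and> S Z True x y)) \<and>
     (\<forall>Z\<in>\<Sigma>. \<forall>u\<in>leaves M le. \<forall>v\<in>leaves M le. u \<noteq> v \<longrightarrow>
        (\<exists>x y. le x u \<and> le y v \<and> (\<exists>a. S Z a x y)))"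

text \<open>Closed real intervals are encoded as pairs (min, max).\<close>

definition interval_ranking ::
  "'a set \<Rightarrow> ('a \<Rightarrow> 'a \<Rightarrow> bool) \<Rightarrow> ('z \<Rightarrow> bool \<Rightarrow> 'a \<Rightarrow> 'a \<Rightarrow> bool) \<Rightarrow> ('a \<Rightarrow> real \<times> real) \<Rightarrow> bool" where
  "interval_ranking M le S I \<longleftrightarrow>
     (\<forall>x\<in>M. fst (I x) \<le> snd (I x)) \<and>
     (\<forall>x y. tlt le x y \<longrightarrow> snd (I y) < fst (I x)) \<and>
     (\<forall>x y. SS S x y \<longrightarrow> max (fst (I x)) (fst (I y)) \<le> min (snd (I x)) (snd (I y)))"

definition clean_f :: "'a set \<Rightarrow> ('a \<Rightarrow> 'a \<Rightarrow> bool) \<Rightarrow> ('a \<Rightarrow> real \<times> real) \<Rightarrow> 'a \<Rightarrow> real" where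
  "clean_f M le I x =
     (if x \<in> leaves M le then Min ((\<lambda>y. fst (I y)) ` leaves M le) else fst (I x))"

definition clean_g :: "'a set \<Rightarrow> ('a \<Rightarrow> 'a \<Rightarrow> bool) \<Rightarrow> ('a \<Rightarrow> real \<times> real) \<Rightarrow> 'a \<Rightarrow> nat" where
  "clean_g M le I x = card {clean_f M le I y | y. y \<in> M \<and> clean_f M le I y \<le> clean_f M le I x}"

definition cleaning :: "'a set \<Rightarrow> ('a \<Rightarrow> 'a \<Rightarrow> bool) \<Rightarrow> ('a \<Rightarrow> real \<times> real) \<Rightarrow> 'a \<Rightarrow> real \<times> real" where
  "cleaning M le I x =
     (if x = troot M le
      then (real (clean_g M le I (troot M le)), real (clean_g M le I (troot M le)))
      else (real (clean_g M le I x), real (clean_g M le I (tparent M le x)) - 1))"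

text \<open>A tau-bounded merge-walk of order n: u 0, ..., u n and v 1, ..., v (n+1).
  The maximum of the intersection of two (intersecting) intervals is the minimum of their maxima.\<close>

definition merge_walk ::
  "'a set \<Rightarrow> ('a \<Rightarrow> 'a \<Rightarrow> bool) \<Rightarrow> ('z \<Rightarrow> bool \<Rightarrow> 'a \<Rightarrow> 'a \<Rightarrow> bool) \<Rightarrow> ('a \<Rightarrow> real \<times> real)
   \<Rightarrow> real \<Rightarrow> nat \<Rightarrow> (nat \<Rightarrow> 'a) \<Rightarrow> (nat \<Rightarrow> 'a) \<Rightarrow> bool" where
  "merge_walk M le S I \<tau> n u v \<longleftrightarrow>
     \<tau> < fst (I (troot M le)) \<and>
     (\<forall>i\<le>n. u i \<in> M) \<and> (\<forall>i\<in>{1..n+1}. v i \<in> M) \<and>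
     u 0 \<in> leaves M le \<and>
     (\<forall>i\<in>{1..n+1}. le (u (i - 1)) (v i) \<or> le (v i) (u (i - 1))) \<and>
     (\<forall>i\<in>{1..n}. SS S (v i) (u i) \<and> min (snd (I (u i))) (snd (I (v i))) \<le> \<tau>) \<and>
     fst (I (v (n + 1))) \<le> \<tau> \<and> v (n + 1) \<noteq> troot M le \<and>
     \<tau> < fst (I (tparent M le (v (n + 1))))"

definition MWReach ::
  "'a set \<Rightarrow> ('a \<Rightarrow> 'a \<Rightarrow> bool) \<Rightarrow> ('z \<Rightarrow> bool \<Rightarrow> 'a \<Rightarrow> 'a \<Rightarrow> bool) \<Rightarrow> ('a \<Rightarrow> real \<times> real)
   \<Rightarrow> nat \<Rightarrow> 'a \<Rightarrow> real \<Rightarrow> 'a set" where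
  "MWReach M le S I r x \<tau> =
     {v (n + 1) | n u v. n \<le> r \<and> u 0 = x \<and> merge_walk M le S I \<tau> n u v}"

definition wr ::
  "'a set \<Rightarrow> ('a \<Rightarrow> 'a \<Rightarrow> bool) \<Rightarrow> ('z \<Rightarrow> bool \<Rightarrow> 'a \<Rightarrow> 'a \<Rightarrow> bool) \<Rightarrow> ('a \<Rightarrow> real \<times> real)
   \<Rightarrow> nat \<Rightarrow> nat" where
  "wr M le S I r =
     Max {card (MWReach M le S I r x \<tau>) | x \<tau>. x \<in> leaves M le \<and> \<tau> < fst (I (troot M le))}"

end

theory Submission
  imports Defs
begin

(* Fix a bound t for the cleaned ranking and let \<theta> be the least value of f whose rank g exceeds t.
   As g is monotone in f, a cleaned interval starts at most t exactly when f is below \<theta>, and a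
   cleaned interval [g x, g (parent x) - 1] ending at most t has f (parent x) \<le> \<theta>, so the original
   interval of x ends below \<theta>. Pick \<tau> < \<theta> above every original endpoint below \<theta>. If the start
   leaf x begins below \<theta>, every t-bounded merge-walk for the cleaning is then a \<tau>-bounded merge-walk
   for the original ranking. Otherwise the only such walk is the trivial one ending at x, which the
   original ranking also reaches, with \<tau> = min I(x). So every cleaned reach set is dominated by an
   original one, and so is the maximum of their sizes. *)

locale finite_tree =
  fixes M :: "'a set" and le :: "'a \<Rightarrow> 'a \<Rightarrow> bool"
  assumes finite_M: "finite M" and tree_order: "tree_order M le"
begin

abbreviation root :: 'a where "root \<equiv> troot M le"
abbreviation parent :: "'a \<Rightarrow> 'a" where "parent \<equiv> tparent M le"

lemma tree_le_in_M: "le x y \<Longrightarrow> x \<in> M \<and> y \<in> M"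
  using tree_order unfolding tree_order_def by (elim conjE) blast

lemma tree_refl: "x \<in> M \<Longrightarrow> le x x"
  using tree_order unfolding tree_order_def by (elim conjE) blast

lemma tree_antisym: "le x y \<Longrightarrow> le y x \<Longrightarrow> x = y"
  using tree_order tree_le_in_M unfolding tree_order_def by (elim conjE) meson

lemma tree_trans: "le x y \<Longrightarrow> le y z \<Longrightarrow> le x z"
  using tree_order tree_le_in_M unfolding tree_order_def by (elim conjE) meson

lemma lower_chain: "le y x \<Longrightarrow> le z x \<Longrightarrow> le y z \<or> le z y"
  using tree_order tree_le_in_M unfolding tree_order_def by (elim conjE) meson

lemma root_least: "root \<in> M \<and> (\<forall>x\<in>M. le root x)"
  unfolding troot_def
proof (rule theI')
  have "\<exists>r\<in>M. \<forall>x\<in>M. le r x"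
    using tree_order unfolding tree_order_def by (elim conjE) assumption
  then show "\<exists>!r. r \<in> M \<and> (\<forall>x\<in>M. le r x)"
    using tree_antisym by blast
qed

lemma root_in_M: "root \<in> M" and root_le: "x \<in> M \<Longrightarrow> le root x"
  using root_least by auto

lemma ex_greatest_strict_lower:
  assumes "y \<in> M" "y \<noteq> root"
  shows "\<exists>p. p \<in> M \<and> tlt le p y \<and> (\<forall>q\<in>M. tlt le q y \<longrightarrow> le q p)"
proof -
  define height where "height q = card {z \<in> M. le z q}" for q
  have "root \<in> M \<and> tlt le root y"
    using assms root_in_M root_le unfolding tlt_def by blast
  moreover have "height q < Suc (card M)" for q
    unfolding height_def using finite_M by (simp add: card_mono le_imp_less_Suc)
  ultimately obtain p where p: "p \<in> M" "tlt le p y"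
    and highest: "\<And>q. q \<in> M \<Longrightarrow> tlt le q y \<Longrightarrow> height q \<le> height p"
    using ex_has_greatest_nat[of "\<lambda>q. q \<in> M \<and> tlt le q y" root height] by blast
  have "le q p" if q: "q \<in> M" "tlt le q y" for q
  proof (rule ccontr)
    assume "\<not> le q p"
    with p q have "le p q" using lower_chain unfolding tlt_def by blast
    then have "{z \<in> M. le z p} \<subset> {z \<in> M. le z q}"
      using \<open>\<not> le q p\<close> q tree_refl tree_trans by blast
    then have "height p < height q"
      unfolding height_def using finite_M by (simp add: psubset_card_mono)
    with highest[OF q] show False by simp
  qed
  with p show ?thesis by blast
qed

lemma parent_greatest_strict_lower:
  assumes "y \<in> M" "y \<noteq> root"
  shows "parent y \<in> M \<and> tlt le (parent y) y \<and> (\<forall>q\<in>M. tlt le q y \<longrightarrow> le q (parent y))"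
  unfolding tparent_def
proof (rule theI')
  show "\<exists>!p. p \<in> M \<and> tlt le p y \<and> (\<forall>q\<in>M. tlt le q y \<longrightarrow> le q p)"
    using ex_greatest_strict_lower[OF assms] tree_antisym by blast
qed

lemma parent_in_M: "y \<in> M \<Longrightarrow> y \<noteq> root \<Longrightarrow> parent y \<in> M"
  and parent_less: "y \<in> M \<Longrightarrow> y \<noteq> root \<Longrightarrow> tlt le (parent y) y"
  using parent_greatest_strict_lower by auto

lemma leaf_le_eq: "x \<in> leaves M le \<Longrightarrow> le x z \<Longrightarrow> z = x"
  using tree_le_in_M unfolding leaves_def by blast

lemma leaf_comparable_le: "x \<in> leaves M le \<Longrightarrow> le x y \<or> le y x \<Longrightarrow> le y x"
  using leaf_le_eq tree_refl unfolding leaves_def by blast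

lemma less_not_leaf: "tlt le x z \<Longrightarrow> x \<notin> leaves M le"
  using leaf_le_eq unfolding tlt_def by blast

lemma parent_not_leaf: "y \<in> M \<Longrightarrow> y \<noteq> root \<Longrightarrow> parent y \<notin> leaves M le"
  using parent_less less_not_leaf by blast

lemma root_not_leaf: "y \<in> M \<Longrightarrow> y \<noteq> root \<Longrightarrow> root \<notin> leaves M le"
  using root_le less_not_leaf unfolding tlt_def by blast

end

definition rank :: "'a set \<Rightarrow> ('a \<Rightarrow> real) \<Rightarrow> 'a \<Rightarrow> nat" where
  "rank M h x = card {h y | y. y \<in> M \<and> h y \<le> h x}"

lemma finite_values_below: "finite M \<Longrightarrow> finite {h y | y. y \<in> M \<and> h y \<le> c}"
  by (rule finite_subset[of _ "h ` M"]) auto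

lemma rank_mono: "finite M \<Longrightarrow> h x \<le> h z \<Longrightarrow> rank M h x \<le> rank M h z"
  unfolding rank_def by (rule card_mono[OF finite_values_below]) auto

lemma rank_strict_mono:
  assumes "finite M" "z \<in> M" "h x < h z"
  shows "rank M h x < rank M h z"
  unfolding rank_def
proof (rule psubset_card_mono[OF finite_values_below[OF assms(1)]])
  have "h z \<in> {h y | y. y \<in> M \<and> h y \<le> h z} - {h y | y. y \<in> M \<and> h y \<le> h x}"
    using assms(2,3) by auto
  then show "{h y | y. y \<in> M \<and> h y \<le> h x} \<subset> {h y | y. y \<in> M \<and> h y \<le> h z}"
    using assms(3) by force
qed

lemma rank_threshold:
  fixes t :: real
  assumes "finite M" "z \<in> M" "t < rank M h z"
  obtains \<theta> where "\<And>y. y \<in> M \<Longrightarrow> rank M h y \<le> t \<longleftrightarrow> h y < \<theta>"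
    and "\<And>y. y \<in> M \<Longrightarrow> rank M h y \<le> t + 1 \<Longrightarrow> h y \<le> \<theta>"
proof -
  define A where "A = {h y | y. y \<in> M \<and> t < rank M h y}"
  have "A \<subseteq> h ` M" unfolding A_def by blast
  then have "finite A" using assms(1) finite_surj by blast
  moreover have "h z \<in> A" unfolding A_def using assms(2,3) by blast
  ultimately have "Min A \<in> A" using Min_in by blast
  then obtain z' where z': "z' \<in> M" "t < rank M h z'" "h z' = Min A"
    unfolding A_def by auto
  have Min_le_above: "Min A \<le> h y" if "y \<in> M" "t < rank M h y" for y
    using Min_le[OF \<open>finite A\<close>] that unfolding A_def by blast
  show thesis
  proof
    fix y assume y: "y \<in> M"
    show "rank M h y \<le> t \<longleftrightarrow> h y < Min A"
    proof
      assume below: "rank M h y \<le> t"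
      show "h y < Min A"
      proof (rule ccontr)
        assume "\<not> h y < Min A"
        then have "rank M h z' \<le> rank M h y" using z'(3) rank_mono[OF assms(1)] by simp
        with below z'(2) show False by linarith
      qed
    next
      assume "h y < Min A"
      then show "rank M h y \<le> t" using Min_le_above[OF y] by fastforce
    qed
    assume below: "rank M h y \<le> t + 1"
    show "h y \<le> Min A"
    proof (rule ccontr)
      assume "\<not> h y \<le> Min A"
      then have "rank M h z' < rank M h y" using z'(3) rank_strict_mono[OF assms(1) y] by simp
      with below z'(2) show False by linarith
    qed
  qed
qed

lemma finite_gap_below:
  fixes V :: "real set"
  assumes "finite V"
  obtains \<tau> where "\<tau> < \<theta>" "\<And>c. c \<in> V \<Longrightarrow> c < \<theta> \<Longrightarrow> c \<le> \<tau>"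
proof
  let ?W = "insert (\<theta> - 1) {c \<in> V. c < \<theta>}"
  have "finite ?W" using assms by simp
  then show "Max ?W < \<theta>" "\<And>c. c \<in> V \<Longrightarrow> c < \<theta> \<Longrightarrow> c \<le> Max ?W"
    by (auto simp: Max_less_iff)
qed

lemma clean_f_nonleaf: "x \<notin> leaves M le \<Longrightarrow> clean_f M le I x = fst (I x)"
  unfolding clean_f_def by simp

lemma fst_cleaning: "fst (cleaning M le I x) = real (rank M (clean_f M le I) x)"
  unfolding cleaning_def clean_g_def rank_def by simp

lemma snd_cleaning_root:
  "snd (cleaning M le I (troot M le)) = real (rank M (clean_f M le I) (troot M le))"
  unfolding cleaning_def clean_g_def rank_def by simp

lemma snd_cleaning:
  "x \<noteq> troot M le \<Longrightarrow> snd (cleaning M le I x) = real (rank M (clean_f M le I) (tparent M le x)) - 1"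
  unfolding cleaning_def clean_g_def rank_def by simp

lemma merge_walkD:
  assumes "merge_walk M le S I \<tau> n u v"
  shows merge_walk_below_root: "\<tau> < fst (I (troot M le))"
    and merge_walk_u_in_M: "i \<le> n \<Longrightarrow> u i \<in> M"
    and merge_walk_v_in_M: "i \<in> {1..n+1} \<Longrightarrow> v i \<in> M"
    and merge_walk_start_leaf: "u 0 \<in> leaves M le"
    and merge_walk_comparable: "i \<in> {1..n+1} \<Longrightarrow> le (u (i - 1)) (v i) \<or> le (v i) (u (i - 1))"
    and merge_walk_merge: "i \<in> {1..n} \<Longrightarrow> SS S (v i) (u i) \<and> min (snd (I (u i))) (snd (I (v i))) \<le> \<tau>"
    and merge_walk_end: "fst (I (v (n + 1))) \<le> \<tau>" "v (n + 1) \<noteq> troot M le"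
      "\<tau> < fst (I (tparent M le (v (n + 1))))"
  using assms unfolding merge_walk_def by auto

lemma MWReach_subset: "MWReach M le S I r x \<tau> \<subseteq> M"
  unfolding MWReach_def using merge_walk_v_in_M by fastforce

lemma MWReach_nonempty_below_root:
  "MWReach M le S I r x \<tau> \<noteq> {} \<Longrightarrow> \<tau> < fst (I (troot M le))"
  unfolding MWReach_def using merge_walk_below_root by fastforce

lemma root_notin_MWReach: "troot M le \<notin> MWReach M le S I r x \<tau>"
  unfolding MWReach_def using merge_walk_end(2) by fastforce

lemma wr_le_wr:
  assumes "finite M"
    and dominated: "\<And>x t. x \<in> leaves M le \<Longrightarrow> t < fst (J (troot M le)) \<Longrightarrow>
      \<exists>\<tau> < fst (I (troot M le)). card (MWReach M le S J r x t) \<le> card (MWReach M le S I r x \<tau>)"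
  shows "wr M le S J r \<le> wr M le S I r"
proof -
  define widths where "widths K = {card (MWReach M le S K r x \<tau>) | x \<tau>.
    x \<in> leaves M le \<and> \<tau> < fst (K (troot M le))}" for K :: "'a \<Rightarrow> real \<times> real"
  have wr_eq: "wr M le S K r = Max (widths K)" for K
    unfolding wr_def widths_def ..
  have "widths K \<subseteq> {..card M}" for K
    unfolding widths_def using card_mono[OF assms(1) MWReach_subset] by auto
  then have finite_widths: "finite (widths K)" for K
    using finite_subset by blast
  show ?thesis
  proof (cases "leaves M le = {}")
    case True
    then show ?thesis unfolding wr_def by simp
  next
    case False
    then obtain x where "x \<in> leaves M le" by blast
    then have "card (MWReach M le S J r x (fst (J (troot M le)) - 1)) \<in> widths J"
      unfolding widths_def by fastforce
    then have "widths J \<noteq> {}" by blast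
    moreover have "w \<le> Max (widths I)" if "w \<in> widths J" for w
    proof -
      obtain x t where x: "x \<in> leaves M le" "t < fst (J (troot M le))"
        and w: "w = card (MWReach M le S J r x t)"
        using \<open>w \<in> widths J\<close> unfolding widths_def by blast
      obtain \<tau> where "\<tau> < fst (I (troot M le))" and "w \<le> card (MWReach M le S I r x \<tau>)"
        using dominated[OF x] w by blast
      moreover from this(1) have "card (MWReach M le S I r x \<tau>) \<in> widths I"
        unfolding widths_def using x(1) by blast
      ultimately show ?thesis using Max_ge[OF finite_widths] order_trans by blast
    qed
    ultimately show ?thesis unfolding wr_eq using finite_widths by (simp add: Max_le_iff)
  qed
qed

locale ranked_tree = finite_tree M le
  for M :: "'a set" and le :: "'a \<Rightarrow> 'a \<Rightarrow> bool" +
  fixes S :: "'z \<Rightarrow> bool \<Rightarrow> 'a \<Rightarrow> 'a \<Rightarrow> bool" and I :: "'a \<Rightarrow> real \<times> real"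
  assumes interval_ranking: "interval_ranking M le S I"
begin

abbreviation cleaned :: "'a \<Rightarrow> real \<times> real" where "cleaned \<equiv> cleaning M le I"

lemma fst_le_snd: "x \<in> M \<Longrightarrow> fst (I x) \<le> snd (I x)"
  using interval_ranking unfolding interval_ranking_def by blast

lemma snd_less_fst: "tlt le x y \<Longrightarrow> snd (I y) < fst (I x)"
  using interval_ranking unfolding interval_ranking_def by blast

lemma related_overlap: "SS S x y \<Longrightarrow> fst (I x) \<le> snd (I y) \<and> fst (I y) \<le> snd (I x)"
  using interval_ranking unfolding interval_ranking_def by fastforce

lemma fst_antimono: "le x y \<Longrightarrow> fst (I y) \<le> fst (I x)"
  using snd_less_fst fst_le_snd tree_le_in_M unfolding tlt_def by fastforce

definition cleaning_cut :: "real \<Rightarrow> real \<Rightarrow> bool" where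
  "cleaning_cut t \<theta> \<longleftrightarrow>
     (\<forall>y\<in>M. fst (cleaned y) \<le> t \<longleftrightarrow> clean_f M le I y < \<theta>) \<and>
     (\<forall>y\<in>M. snd (cleaned y) \<le> t \<longrightarrow> snd (I y) < \<theta>)"

lemma cleaning_cut_exists:
  assumes "t < fst (cleaned root)"
  obtains \<theta> where "cleaning_cut t \<theta>"
proof -
  obtain \<theta>
    where cut_rank: "\<And>y. y \<in> M \<Longrightarrow> rank M (clean_f M le I) y \<le> t \<longleftrightarrow> clean_f M le I y < \<theta>"
      and cut_rank_succ:
        "\<And>y. y \<in> M \<Longrightarrow> rank M (clean_f M le I) y \<le> t + 1 \<Longrightarrow> clean_f M le I y \<le> \<theta>"
    using rank_threshold[OF finite_M root_in_M] assms unfolding fst_cleaning by blast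
  have "cleaning_cut t \<theta>"
    unfolding cleaning_cut_def
  proof (intro conjI ballI impI)
    show "fst (cleaned y) \<le> t \<longleftrightarrow> clean_f M le I y < \<theta>" if "y \<in> M" for y
      using cut_rank[OF that] unfolding fst_cleaning .
  next
    fix y assume y: "y \<in> M" "snd (cleaned y) \<le> t"
    have "y \<noteq> root"
    proof
      assume "y = root"
      then show False using y(2) assms by (simp add: snd_cleaning_root fst_cleaning)
    qed
    then have "rank M (clean_f M le I) (parent y) \<le> t + 1"
      using y(2) snd_cleaning by fastforce
    then have "fst (I (parent y)) \<le> \<theta>"
      using cut_rank_succ parent_in_M[OF y(1)] clean_f_nonleaf parent_not_leaf[OF y(1)] \<open>y \<noteq> root\<close>
      by fastforce
    then show "snd (I y) < \<theta>"
      using snd_less_fst[OF parent_less[OF y(1) \<open>y \<noteq> root\<close>]] by linarith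
  qed
  then show thesis by (rule that)
qed

lemma leaf_in_own_MWReach:
  assumes "x \<in> leaves M le" "x \<noteq> root"
  shows "x \<in> MWReach M le S I r x (fst (I x))"
proof -
  have x: "x \<in> M" using assms(1) unfolding leaves_def by blast
  have "fst (I x) < fst (I root)"
    using snd_less_fst[of root x] fst_le_snd[OF x] root_le[OF x] assms(2) unfolding tlt_def by fastforce
  moreover have "fst (I x) < fst (I (parent x))"
    using snd_less_fst[OF parent_less[OF x assms(2)]] fst_le_snd[OF x] by linarith
  ultimately have "merge_walk M le S I (fst (I x)) 0 (\<lambda>_. x) (\<lambda>_. x)"
    unfolding merge_walk_def using assms x tree_refl by auto
  then show ?thesis unfolding MWReach_def by fastforce
qed

context
  fixes t \<theta> :: real
  assumes cut: "cleaning_cut t \<theta>"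
begin

lemma cut_fst: "y \<in> M \<Longrightarrow> fst (cleaned y) \<le> t \<longleftrightarrow> clean_f M le I y < \<theta>"
  using cut unfolding cleaning_cut_def by blast

lemma cut_snd: "y \<in> M \<Longrightarrow> snd (cleaned y) \<le> t \<Longrightarrow> snd (I y) < \<theta>"
  using cut unfolding cleaning_cut_def by blast

lemma nonleaf_above_cut:
  "y \<in> M \<Longrightarrow> y \<notin> leaves M le \<Longrightarrow> t < fst (cleaned y) \<Longrightarrow> \<theta> \<le> fst (I y)"
  using cut_fst clean_f_nonleaf by fastforce

lemma cleaned_merge_below_cut:
  assumes walk: "merge_walk M le S cleaned t n u v" and i: "i \<in> {1..n}"
  shows "min (snd (I (u i))) (snd (I (v i))) < \<theta>" "fst (I (u i)) < \<theta>" "fst (I (v i)) < \<theta>"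
proof -
  have in_M: "u i \<in> M" "v i \<in> M"
    using merge_walk_u_in_M[OF walk] merge_walk_v_in_M[OF walk] i by auto
  have merge: "SS S (v i) (u i)" "min (snd (cleaned (u i))) (snd (cleaned (v i))) \<le> t"
    using merge_walk_merge[OF walk i] by auto
  show below: "min (snd (I (u i))) (snd (I (v i))) < \<theta>"
    using merge(2) cut_snd in_M by (auto simp: min_le_iff_disj min_less_iff_disj)
  show "fst (I (u i)) < \<theta>" "fst (I (v i)) < \<theta>"
    using below related_overlap[OF merge(1)] fst_le_snd[OF in_M(1)] fst_le_snd[OF in_M(2)]
    by (auto simp: min_less_iff_disj)
qed

lemma cleaned_walk_end_below_cut:
  assumes walk: "merge_walk M le S cleaned t n u v" and start: "fst (I (u 0)) < \<theta>"
  shows "fst (I (v (n + 1))) < \<theta>"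
proof -
  let ?w = "v (n + 1)"
  have w: "?w \<in> M" using merge_walk_v_in_M[OF walk] by simp
  have f_w: "clean_f M le I ?w < \<theta>" using cut_fst[OF w] merge_walk_end(1)[OF walk] by blast
  show ?thesis
  proof (cases "?w \<in> leaves M le")
    case False
    with f_w show ?thesis by (simp add: clean_f_nonleaf)
  next
    case True
    have "le ?w (u n) \<or> le (u n) ?w"
      using merge_walk_comparable[OF walk, of "n + 1"] by auto
    then have "le (u n) ?w" by (rule leaf_comparable_le[OF True])
    moreover have "fst (I (u n)) < \<theta>"
    proof (cases "n = 0")
      case True
      with start show ?thesis by simp
    next
      case False
      then show ?thesis using cleaned_merge_below_cut(2)[OF walk, of n] by simp
    qed
    ultimately show ?thesis using fst_antimono by fastforce
  qed
qed

lemma cleaned_walk_below_cut_is_walk: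
  assumes walk: "merge_walk M le S cleaned t n u v" and start: "fst (I (u 0)) < \<theta>"
    and gap: "\<tau> < \<theta>" "\<And>y. y \<in> M \<Longrightarrow> fst (I y) < \<theta> \<Longrightarrow> fst (I y) \<le> \<tau>"
      "\<And>y. y \<in> M \<Longrightarrow> snd (I y) < \<theta> \<Longrightarrow> snd (I y) \<le> \<tau>"
  shows "merge_walk M le S I \<tau> n u v"
proof -
  let ?w = "v (n + 1)"
  have w: "?w \<in> M" "?w \<noteq> root"
    using merge_walk_v_in_M[OF walk] merge_walk_end(2)[OF walk] by auto
  have "\<theta> \<le> fst (I root)"
    using nonleaf_above_cut[OF root_in_M root_not_leaf[OF w] merge_walk_below_root[OF walk]] .
  moreover have "\<theta> \<le> fst (I (parent ?w))"
    using nonleaf_above_cut[OF parent_in_M[OF w] parent_not_leaf[OF w] merge_walk_end(3)[OF walk]] .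
  moreover have "fst (I ?w) \<le> \<tau>"
    using gap(2)[OF w(1) cleaned_walk_end_below_cut[OF walk start]] .
  moreover have "min (snd (I (u i))) (snd (I (v i))) \<le> \<tau>" if i: "i \<in> {1..n}" for i
    using cleaned_merge_below_cut(1)[OF walk i] gap(3) i
      merge_walk_u_in_M[OF walk] merge_walk_v_in_M[OF walk]
    by (auto simp: min_less_iff_disj min_le_iff_disj)
  ultimately show ?thesis
    using walk gap(1) w(2) merge_walk_merge[OF walk] unfolding merge_walk_def by auto
qed

lemma cleaned_walk_above_cut_trivial:
  assumes walk: "merge_walk M le S cleaned t n u v" and start: "\<theta> \<le> fst (I (u 0))"
  shows "n = 0 \<and> v 1 = u 0"
proof -
  have v1: "v 1 \<in> M" using merge_walk_v_in_M[OF walk] by simp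
  have "le (u 0) (v 1) \<or> le (v 1) (u 0)"
    using merge_walk_comparable[OF walk, of 1] by simp
  then have "le (v 1) (u 0)" by (rule leaf_comparable_le[OF merge_walk_start_leaf[OF walk]])
  then have "fst (I (u 0)) \<le> fst (I (v 1))" by (rule fst_antimono)
  with start have v1_above: "\<not> fst (I (v 1)) < \<theta>" by linarith
  then have "n = 0" using cleaned_merge_below_cut(3)[OF walk, of 1] by fastforce
  moreover have "v 1 = u 0"
  proof (rule ccontr)
    assume "v 1 \<noteq> u 0"
    then have "v 1 \<notin> leaves M le"
      using less_not_leaf \<open>le (v 1) (u 0)\<close> unfolding tlt_def by blast
    moreover have "clean_f M le I (v 1) < \<theta>"
      using cut_fst[OF v1] merge_walk_end(1)[OF walk] \<open>n = 0\<close> by simp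
    ultimately show False using v1_above by (simp add: clean_f_nonleaf)
  qed
  ultimately show ?thesis ..
qed

lemma MWReach_cleaned_below_cut:
  assumes "fst (I x) < \<theta>" and "\<tau> < \<theta>"
    and "\<And>y. y \<in> M \<Longrightarrow> fst (I y) < \<theta> \<Longrightarrow> fst (I y) \<le> \<tau>"
    and "\<And>y. y \<in> M \<Longrightarrow> snd (I y) < \<theta> \<Longrightarrow> snd (I y) \<le> \<tau>"
  shows "MWReach M le S cleaned r x t \<subseteq> MWReach M le S I r x \<tau>"
proof
  fix w assume "w \<in> MWReach M le S cleaned r x t"
  then obtain n u v where w: "w = v (n + 1)" "n \<le> r" "u 0 = x"
    and walk: "merge_walk M le S cleaned t n u v"
    unfolding MWReach_def by blast
  have "merge_walk M le S I \<tau> n u v"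
    using cleaned_walk_below_cut_is_walk[OF walk _ assms(2-4)] assms(1) w(3) by simp
  with w show "w \<in> MWReach M le S I r x \<tau>" unfolding MWReach_def by blast
qed

lemma MWReach_cleaned_above_cut:
  assumes "\<theta> \<le> fst (I x)"
  shows "MWReach M le S cleaned r x t \<subseteq> {x}"
proof
  fix w assume "w \<in> MWReach M le S cleaned r x t"
  then obtain n u v where w: "w = v (n + 1)" "u 0 = x"
    and walk: "merge_walk M le S cleaned t n u v"
    unfolding MWReach_def by blast
  then show "w \<in> {x}" using cleaned_walk_above_cut_trivial[OF walk] assms by simp
qed

end

lemma card_MWReach_cleaning_le:
  assumes x: "x \<in> leaves M le" and t: "t < fst (cleaned root)"
  shows "\<exists>\<tau> < fst (I root). card (MWReach M le S cleaned r x t) \<le> card (MWReach M le S I r x \<tau>)"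
proof (cases "MWReach M le S cleaned r x t = {}")
  case True
  then show ?thesis by (intro exI[of _ "fst (I root) - 1"]) simp
next
  case nonempty: False
  obtain \<theta> where cut: "cleaning_cut t \<theta>"
    using cleaning_cut_exists[OF t] .
  have finite_reach: "finite (MWReach M le S I r x \<tau>)" for \<tau>
    using finite_M MWReach_subset by (rule finite_subset[rotated])
  show ?thesis
  proof (cases "fst (I x) < \<theta>")
    case True
    obtain \<tau> where gap: "\<tau> < \<theta>"
      "\<And>c. c \<in> fst ` I ` M \<union> snd ` I ` M \<Longrightarrow> c < \<theta> \<Longrightarrow> c \<le> \<tau>"
      using finite_gap_below[of "fst ` I ` M \<union> snd ` I ` M"] finite_M by blast
    have gap_fst: "\<And>y. y \<in> M \<Longrightarrow> fst (I y) < \<theta> \<Longrightarrow> fst (I y) \<le> \<tau>"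
      and gap_snd: "\<And>y. y \<in> M \<Longrightarrow> snd (I y) < \<theta> \<Longrightarrow> snd (I y) \<le> \<tau>"
      using gap(2) by auto
    have reach: "MWReach M le S cleaned r x t \<subseteq> MWReach M le S I r x \<tau>"
      using MWReach_cleaned_below_cut[OF cut True gap(1) gap_fst gap_snd] .
    with nonempty have "MWReach M le S I r x \<tau> \<noteq> {}" by blast
    then have "\<tau> < fst (I root)" by (rule MWReach_nonempty_below_root)
    with reach show ?thesis using card_mono[OF finite_reach] by blast
  next
    case False
    then have "MWReach M le S cleaned r x t \<subseteq> {x}"
      by (intro MWReach_cleaned_above_cut[OF cut]) simp
    with nonempty have reach: "MWReach M le S cleaned r x t = {x}" by blast
    have "x \<noteq> root"
    proof
      assume "x = root"
      with reach show False using root_notin_MWReach[of M le S cleaned r x t] by simp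
    qed
    then have own: "x \<in> MWReach M le S I r x (fst (I x))"
      by (rule leaf_in_own_MWReach[OF x])
    then have "fst (I x) < fst (I root)"
      by (intro MWReach_nonempty_below_root) blast
    moreover have "card (MWReach M le S cleaned r x t) \<le> card (MWReach M le S I r x (fst (I x)))"
      unfolding reach using card_mono[OF finite_reach, of "{x}"] own by simp
    ultimately show ?thesis by blast
  qed
qed

end

theorem lemma5p5:
  fixes \<Sigma> :: "'z set" and M :: "'a set" and le :: "'a \<Rightarrow> 'a \<Rightarrow> bool"
    and S :: "'z \<Rightarrow> bool \<Rightarrow> 'a \<Rightarrow> 'a \<Rightarrow> bool" and I :: "'a \<Rightarrow> real \<times> real" and r :: nat
  assumes "merge_model \<Sigma> M le S"
    and "interval_ranking M le S I"
    and "r \<ge> 1"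
  shows "wr M le S (cleaning M le I) r \<le> wr M le S I r"
proof -
  have "finite M" using assms(1) unfolding merge_model_def by blast
  moreover have "tree_order M le" using assms(1) unfolding merge_model_def by blast
  ultimately interpret ranked_tree M le S I
    using assms(2) by unfold_locales
  show ?thesis
    using finite_M card_MWReach_cleaning_le by (rule wr_le_wr)
qed

end
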